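(* Let $I=\langle Q,D,\tau_{in},\tau_{out}\rangle$ be an instance of DTP, let $C_I$ be its critical domain, $U_I$ its critical update and $Q_I'$ its critical query (as defined in the context). Then DTP holds for $I$ if and only if for every tuple $\vec o$ over $C_I$, $\vec o\in Q_I'(D\cup U_I,\tau_{out})$ implies $\vec o\in Q_I'(D,\tau_{out})$.
   Context: Temporal Datalog. Constants are partitioned into objects and integer time points; variables into object variables and time variables. A time term is a time point, a time variable, or an expression $t+k$ with $t$ a time variable and $k\in\mathbb{Z}$. Each predicate is either extensional (EDB) or intensional (IDB) and has an arity $n\ge0$, each position being of object sort or time sort; a predicate is rigid if all its positions are of object sort, and temporal if its last position is of time sort and all others are of object sort. An atom $P(t_1,\dots,t_n)$ has terms of the required sorts. A rule is $\bigwedge_i\alpha_i\to\alpha$ with $\alpha$ and all $\alpha_i$ rigid or temporal atoms, $\alpha$ IDB whenever the body is nonempty, and every head variable occurring in the body. A program is a finite set of rules. A fact is a ground rigid or temporal atom without $+$ (identified with the rule $\top\to\alpha$); a dataset is a finite set of EDB facts. Rules are read as universally quantified first-order sentences with $+$ interpreted as integer addition; $\Pi\models\alpha$ denotes entailment. A query is $Q=\langle P_Q,\Pi_Q\rangle$ with $\Pi_Q$ a program and $P_Q$ an IDB predicate of $\Pi_Q$; it is temporal if $P_Q$ is temporal. For a temporal query $Q$, dataset $D$ and time point $\tau$, $Q(D,\tau)$ is the set of tuples of objects $\vec o$ with $\Pi_Q\cup D\models P_Q(\vec o,\tau)$. A $\tau_{in}$-history is a dataset consisting of rigid facts and temporal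 facts with time argument $\le\tau_{in}$; a $\tau_{in}$-update is a dataset consisting of temporal facts with time argument $>\tau_{in}$. Definitive Time Point (DTP): an instance is $\langle Q,D,\tau_{in},\tau_{out}\rangle$ with $Q$ a temporal query, $D$ a $\tau_{in}$-history and $\tau_{out}\le\tau_{in}$; DTP holds for it iff $Q(D,\tau_{out})=Q(D\cup U,\tau_{out})$ for every $\tau_{in}$-update $U$. Critical domain: $C_I$ is the set of all objects occurring in $\Pi_Q\cup D$ together with one fresh object $o_I$. Let $\psi$ be the renaming that maps each temporal EDB predicate to a fresh temporal IDB predicate of the same arity. Critical update: with $A$ a fresh unary temporal EDB predicate, $U_I$ is the $\tau_{in}$-update containing $A(\tau_{in}+1)$ and all facts $P(\vec o,\tau_{in}+1)$ for each temporal EDB predicate $P$ of $\Pi_Q$ and each tuple $\vec o$ over $C_I$. Critical query: with $V$ a fresh unary temporal IDB predicate, $Q_I'=\langle P_Q,\Pi'\rangle$ where $\Pi'$ consists of $\psi(\Pi_Q)$ together with the rules $A(t)\to V(t)$, $V(t)\to V(t+1)$, and, for each temporal EDB predicate $P$ of $\Pi_Q$ with $P'=\psi(P)$, the rules $P(\vec x,t)\to P'(\vec x,t)$ and $V(t+1)\wedge P'(\vec x,t)\to P'(\vec x,t+1)$. *)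

theory Defs
  imports Main
begin

text \<open>A predicate carries its name, whether it is extensional (EDB), the number of
  object positions, and whether it is temporal (last position of time sort) or rigid.\<close>
datatype 'n pred = Pred (pname: 'n) (is_edb: bool) (oarity: nat) (is_temporal: bool)

text \<open>Time terms: time points (int), or \<open>t + k\<close> for a time variable t (nat) and k :: int
  (a plain time variable t is \<open>TV t 0\<close>).\<close>
datatype 'o oterm = OC 'o | OV nat
datatype tterm = TC int | TV nat int

datatype ('n, 'o) atom = Atom "'n pred" "'o oterm list" "tterm option"

fun atom_pred :: "('n, 'o) atom \<Rightarrow> 'n pred" where
  "atom_pred (Atom P _ _) = P"

fun wf_atom :: "('n, 'o) atom \<Rightarrow> bool" where
  "wf_atom (Atom P os t) \<longleftrightarrow> length os = oarity P \<and> (is_temporal P \<longleftrightarrow> t \<noteq> None)"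

fun ovars_ot :: "'o oterm \<Rightarrow> nat set" where
  "ovars_ot (OC _) = {}" | "ovars_ot (OV x) = {x}"

fun tvars_tt :: "tterm \<Rightarrow> nat set" where
  "tvars_tt (TC _) = {}" | "tvars_tt (TV x _) = {x}"

fun ovars_atom :: "('n, 'o) atom \<Rightarrow> nat set" where
  "ovars_atom (Atom _ os _) = (\<Union>ot\<in>set os. ovars_ot ot)"

fun tvars_atom :: "('n, 'o) atom \<Rightarrow> nat set" where
  "tvars_atom (Atom _ _ t) = (case t of None \<Rightarrow> {} | Some tt \<Rightarrow> tvars_tt tt)"

fun consts_atom :: "('n, 'o) atom \<Rightarrow> 'o set" where
  "consts_atom (Atom _ os _) = {c. OC c \<in> set os}"

datatype ('n, 'o) rule = Rule (body: "('n, 'o) atom list") (head: "('n, 'o) atom")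

definition wf_rule :: "('n, 'o) rule \<Rightarrow> bool" where
  "wf_rule r \<longleftrightarrow>
     (\<forall>a\<in>set (body r). wf_atom a) \<and> wf_atom (head r) \<and>
     (body r \<noteq> [] \<longrightarrow> \<not> is_edb (atom_pred (head r))) \<and>
     ovars_atom (head r) \<subseteq> (\<Union>a\<in>set (body r). ovars_atom a) \<and>
     tvars_atom (head r) \<subseteq> (\<Union>a\<in>set (body r). tvars_atom a)"

type_synonym ('n, 'o) program = "('n, 'o) rule set"

definition wf_program :: "('n, 'o) program \<Rightarrow> bool" where
  "wf_program \<Pi> \<longleftrightarrow> finite \<Pi> \<and> (\<forall>r\<in>\<Pi>. wf_rule r)"

definition preds_of_rule :: "('n, 'o) rule \<Rightarrow> 'n pred set" where
  "preds_of_rule r = atom_pred ` (set (body r) \<union> {head r})"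

definition preds_of :: "('n, 'o) program \<Rightarrow> 'n pred set" where
  "preds_of \<Pi> = (\<Union>r\<in>\<Pi>. preds_of_rule r)"

definition consts_of :: "('n, 'o) program \<Rightarrow> 'o set" where
  "consts_of \<Pi> = (\<Union>r\<in>\<Pi>. \<Union>a\<in>set (body r) \<union> {head r}. consts_atom a)"

type_synonym ('n, 'o) fact = "'n pred \<times> 'o list \<times> int option"

definition wf_fact :: "('n, 'o) fact \<Rightarrow> bool" where
  "wf_fact f \<longleftrightarrow> (case f of (P, os, t) \<Rightarrow>
     length os = oarity P \<and> (is_temporal P \<longleftrightarrow> t \<noteq> None))"

definition is_dataset :: "('n, 'o) fact set \<Rightarrow> bool" where
  "is_dataset D \<longleftrightarrow> finite D \<and> (\<forall>f\<in>D. wf_fact f \<and> is_edb (fst f))"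

definition consts_facts :: "('n, 'o) fact set \<Rightarrow> 'o set" where
  "consts_facts D = (\<Union>f\<in>D. set (fst (snd f)))"

fun eval_ot :: "(nat \<Rightarrow> 'o) \<Rightarrow> 'o oterm \<Rightarrow> 'o" where
  "eval_ot \<sigma> (OC c) = c" | "eval_ot \<sigma> (OV x) = \<sigma> x"

fun eval_tt :: "(nat \<Rightarrow> int) \<Rightarrow> tterm \<Rightarrow> int" where
  "eval_tt \<theta> (TC k) = k" | "eval_tt \<theta> (TV x k) = \<theta> x + k"

fun eval_atom :: "(nat \<Rightarrow> 'o) \<Rightarrow> (nat \<Rightarrow> int) \<Rightarrow> ('n, 'o) atom \<Rightarrow> ('n, 'o) fact" where
  "eval_atom \<sigma> \<theta> (Atom P os t) = (P, map (eval_ot \<sigma>) os, map_option (eval_tt \<theta>) t)"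

text \<open>An (Herbrand) interpretation is a set of facts; the time sort is interpreted by the
  integers with \<open>+\<close> as integer addition.\<close>
definition sat_rule :: "('n, 'o) fact set \<Rightarrow> ('n, 'o) rule \<Rightarrow> bool" where
  "sat_rule M r \<longleftrightarrow>
     (\<forall>\<sigma> \<theta>. (\<forall>a\<in>set (body r). eval_atom \<sigma> \<theta> a \<in> M) \<longrightarrow> eval_atom \<sigma> \<theta> (head r) \<in> M)"

definition entails :: "('n, 'o) program \<Rightarrow> ('n, 'o) fact set \<Rightarrow> ('n, 'o) fact \<Rightarrow> bool" where
  "entails \<Pi> D \<alpha> \<longleftrightarrow> (\<forall>M. (\<forall>r\<in>\<Pi>. sat_rule M r) \<longrightarrow> D \<subseteq> M \<longrightarrow> \<alpha> \<in> M)"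

type_synonym ('n, 'o) query = "'n pred \<times> ('n, 'o) program"

definition wf_query :: "('n, 'o) query \<Rightarrow> bool" where
  "wf_query Q \<longleftrightarrow> wf_program (snd Q) \<and> \<not> is_edb (fst Q) \<and> fst Q \<in> preds_of (snd Q)"

definition temporal_query :: "('n, 'o) query \<Rightarrow> bool" where
  "temporal_query Q \<longleftrightarrow> is_temporal (fst Q)"

definition answers :: "('n, 'o) query \<Rightarrow> ('n, 'o) fact set \<Rightarrow> int \<Rightarrow> 'o list set" where
  "answers Q D \<tau> = {os. length os = oarity (fst Q) \<and> entails (snd Q) D (fst Q, os, Some \<tau>)}"

definition is_history :: "int \<Rightarrow> ('n, 'o) fact set \<Rightarrow> bool" where
  "is_history \<tau>in D \<longleftrightarrow> is_dataset D \<and>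
     (\<forall>f\<in>D. case snd (snd f) of None \<Rightarrow> True | Some \<tau> \<Rightarrow> \<tau> \<le> \<tau>in)"

definition is_update :: "int \<Rightarrow> ('n, 'o) fact set \<Rightarrow> bool" where
  "is_update \<tau>in U \<longleftrightarrow> is_dataset U \<and>
     (\<forall>f\<in>U. case snd (snd f) of None \<Rightarrow> False | Some \<tau> \<Rightarrow> \<tau> > \<tau>in)"

definition DTP :: "('n, 'o) query \<Rightarrow> ('n, 'o) fact set \<Rightarrow> int \<Rightarrow> int \<Rightarrow> bool" where
  "DTP Q D \<tau>in \<tau>out \<longleftrightarrow>
     (\<forall>U. is_update \<tau>in U \<longrightarrow> answers Q D \<tau>out = answers Q (D \<union> U) \<tau>out)"

text \<open>Fresh predicate names: the original names are embedded via \<open>Orig\<close>; \<open>PsiN n\<close> names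
  \<open>\<psi>(P)\<close>; \<open>NameA\<close>, \<open>NameV\<close> name the fresh predicates A and V.\<close>
datatype 'n xname = Orig 'n | PsiN 'n | NameA | NameV

abbreviation lift_pred :: "'n pred \<Rightarrow> 'n xname pred" where
  "lift_pred \<equiv> map_pred Orig"

fun lift_atom :: "('n, 'o) atom \<Rightarrow> ('n xname, 'o) atom" where
  "lift_atom (Atom P os t) = Atom (lift_pred P) os t"

definition lift_facts :: "('n, 'o) fact set \<Rightarrow> ('n xname, 'o) fact set" where
  "lift_facts D = (\<lambda>(P, os, t). (lift_pred P, os, t)) ` D"

fun psi_pred :: "'n pred \<Rightarrow> 'n xname pred" where
  "psi_pred (Pred n e k t) = (if e \<and> t then Pred (PsiN n) False k True else Pred (Orig n) e k t)"

fun psi_atom :: "('n, 'o) atom \<Rightarrow> ('n xname, 'o) atom" where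
  "psi_atom (Atom P os t) = Atom (psi_pred P) os t"

fun psi_rule :: "('n, 'o) rule \<Rightarrow> ('n xname, 'o) rule" where
  "psi_rule (Rule bs h) = Rule (map psi_atom bs) (psi_atom h)"

definition predA :: "'n xname pred" where "predA = Pred NameA True 0 True"
definition predV :: "'n xname pred" where "predV = Pred NameV False 0 True"

definition temporal_edb_preds :: "('n, 'o) program \<Rightarrow> 'n pred set" where
  "temporal_edb_preds \<Pi> = {P \<in> preds_of \<Pi>. is_edb P \<and> is_temporal P}"

definition crit_domain :: "('n, 'o) query \<Rightarrow> ('n, 'o) fact set \<Rightarrow> 'o \<Rightarrow> 'o set" where
  "crit_domain Q D oI = consts_of (snd Q) \<union> consts_facts D \<union> {oI}"

definition crit_update ::
  "('n, 'o) query \<Rightarrow> ('n, 'o) fact set \<Rightarrow> 'o \<Rightarrow> int \<Rightarrow> ('n xname, 'o) fact set" where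
  "crit_update Q D oI \<tau>in =
     {(predA, [], Some (\<tau>in + 1))} \<union>
     {(lift_pred P, os, Some (\<tau>in + 1)) | P os.
        P \<in> temporal_edb_preds (snd Q) \<and> length os = oarity P \<and> set os \<subseteq> crit_domain Q D oI}"

definition xvars :: "nat \<Rightarrow> 'o oterm list" where
  "xvars k = map OV [0..<k]"

definition tvar :: "int \<Rightarrow> tterm option" where
  "tvar k = Some (TV 0 k)"

definition crit_program :: "('n, 'o) query \<Rightarrow> ('n xname, 'o) program" where
  "crit_program Q =
     psi_rule ` snd Q \<union>
     { Rule [Atom predA [] (tvar 0)] (Atom predV [] (tvar 0)),
       Rule [Atom predV [] (tvar 0)] (Atom predV [] (tvar 1)) } \<union>
     (\<Union>P\<in>temporal_edb_preds (snd Q).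
       { Rule [Atom (lift_pred P) (xvars (oarity P)) (tvar 0)]
              (Atom (psi_pred P) (xvars (oarity P)) (tvar 0)),
         Rule [Atom predV [] (tvar 1), Atom (psi_pred P) (xvars (oarity P)) (tvar 0)]
              (Atom (psi_pred P) (xvars (oarity P)) (tvar 1)) })"

text \<open>\<open>Q'_I = \<langle>P_Q, \<Pi>'\<rangle>\<close> (P_Q is IDB, so it is unaffected by \<psi>).\<close>
definition crit_query :: "('n, 'o) query \<Rightarrow> ('n xname, 'o) query" where
  "crit_query Q = (lift_pred (fst Q), crit_program Q)"

end

theory Submission
  imports Defs
begin

text \<open>Entailment is derivability in the least model. If the critical program derives an
  answer from \<open>D \<union> U_I\<close>, then, read back through \<open>\<psi>\<close>, the original program derives it from
  \<open>D\<close> and all temporal EDB facts over \<open>C_I\<close> after \<open>\<tau>in\<close>; by compactness finitely many of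
  these suffice and form an update, so DTP makes it an answer over \<open>D\<close> alone.
  Conversely, let an update \<open>U\<close> add an answer. Mapping every object outside \<open>\<Pi>_Q\<close> and \<open>D\<close>
  to \<open>oI\<close> preserves derivations and fixes \<open>D\<close>, and the collapsed update is simulated by \<open>U_I\<close>:
  the rules for \<open>V\<close> and \<open>\<psi>(P)\<close> carry every fact over \<open>C_I\<close> at \<open>\<tau>in + 1\<close> to all later times.
  The hypothesis yields the collapsed answer over \<open>D\<close>; its objects then occur in \<open>\<Pi>_Q\<close> or
  \<open>D\<close>, so collapsing did not change it.\<close>

inductive derivable :: "('n, 'o) program \<Rightarrow> ('n, 'o) fact set \<Rightarrow> ('n, 'o) fact \<Rightarrow> bool"
  for \<Pi> B where
  base: "f \<in> B \<Longrightarrow> derivable \<Pi> B f"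
| step: "r \<in> \<Pi> \<Longrightarrow> (\<And>a. a \<in> set (body r) \<Longrightarrow> derivable \<Pi> B (eval_atom \<sigma> \<theta> a))
     \<Longrightarrow> derivable \<Pi> B (eval_atom \<sigma> \<theta> (head r))"

lemma derivable_stepI:
  assumes "r \<in> \<Pi>" "\<And>a. a \<in> set (body r) \<Longrightarrow> derivable \<Pi> B (eval_atom \<sigma> \<theta> a)"
    and "f = eval_atom \<sigma> \<theta> (head r)"
  shows "derivable \<Pi> B f"
  using derivable.step[OF assms(1,2)] assms(3) by simp

lemma derivable_in_model:
  assumes "derivable \<Pi> B f" "\<forall>r\<in>\<Pi>. sat_rule M r" "B \<subseteq> M"
  shows "f \<in> M"
  using assms by (induction rule: derivable.induct) (auto simp: sat_rule_def)

lemma entails_iff_derivable: "entails \<Pi> B f \<longleftrightarrow> derivable \<Pi> B f"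
proof
  assume "entails \<Pi> B f"
  moreover have "\<forall>r\<in>\<Pi>. sat_rule {f. derivable \<Pi> B f} r"
    by (auto simp: sat_rule_def intro: derivable.step)
  ultimately show "derivable \<Pi> B f"
    unfolding entails_def by (blast intro: derivable.base)
qed (auto simp: entails_def intro: derivable_in_model)

lemma derivable_mono:
  assumes "derivable \<Pi> B f" "B \<subseteq> B'"
  shows "derivable \<Pi> B' f"
  using assms by (induction rule: derivable.induct) (auto intro: derivable.intros)

lemma derivable_finite_base:
  assumes "derivable \<Pi> B f"
  obtains F where "F \<subseteq> B" "finite F" "derivable \<Pi> F f"
proof -
  from assms have "\<exists>F \<subseteq> B. finite F \<and> derivable \<Pi> F f"
  proof (induction rule: derivable.induct)
    case (base f)
    then show ?case by (intro exI[of _ "{f}"]) (auto intro: derivable.base)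
  next
    case (step r \<sigma> \<theta>)
    then obtain F where F: "\<And>a. a \<in> set (body r) \<Longrightarrow>
        F a \<subseteq> B \<and> finite (F a) \<and> derivable \<Pi> (F a) (eval_atom \<sigma> \<theta> a)"
      by metis
    let ?F = "\<Union>a\<in>set (body r). F a"
    have "derivable \<Pi> ?F (eval_atom \<sigma> \<theta> (head r))"
      using F by (intro derivable.step[OF step.hyps(1)]) (blast intro: derivable_mono)
    with F show ?case by (intro exI[of _ ?F]) auto
  qed
  with that show ?thesis by blast
qed

lemma wf_fact_eval_atom: "wf_atom a \<Longrightarrow> wf_fact (eval_atom \<sigma> \<theta> a)"
  by (cases a) (auto simp: wf_fact_def)

lemma derivable_wf_fact:
  assumes "derivable \<Pi> B f" "wf_program \<Pi>" "\<forall>g\<in>B. wf_fact g"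
  shows "wf_fact f"
  using assms
  by (induction rule: derivable.induct)
     (auto simp: wf_program_def wf_rule_def intro: wf_fact_eval_atom)

lemma objects_eval_atom:
  "set (fst (snd (eval_atom \<sigma> \<theta> a))) = consts_atom a \<union> \<sigma> ` ovars_atom a"
proof -
  have "eval_ot \<sigma> ` set os = {c. OC c \<in> set os} \<union> \<sigma> ` (\<Union>ot\<in>set os. ovars_ot ot)" for os
  proof (induction os)
    case (Cons ot os)
    then show ?case by (cases ot) auto
  qed simp
  then show ?thesis by (cases a) simp
qed

lemma derivable_objects:
  assumes "derivable \<Pi> B f" "wf_program \<Pi>"
  shows "set (fst (snd f)) \<subseteq> consts_of \<Pi> \<union> consts_facts B"
  using assms
proof (induction rule: derivable.induct)
  case (base f)
  then show ?case by (auto simp: consts_facts_def)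
next
  case (step r \<sigma> \<theta>)
  have "ovars_atom (head r) \<subseteq> (\<Union>a\<in>set (body r). ovars_atom a)"
    using step.hyps(1) step.prems by (auto simp: wf_program_def wf_rule_def)
  then have "\<sigma> ` ovars_atom (head r) \<subseteq> (\<Union>a\<in>set (body r). set (fst (snd (eval_atom \<sigma> \<theta> a))))"
    by (auto simp: objects_eval_atom)
  moreover have "consts_atom (head r) \<subseteq> consts_of \<Pi>"
    using step.hyps(1) by (auto simp: consts_of_def)
  ultimately show ?case
    using step.IH step.prems unfolding objects_eval_atom by blast
qed

definition map_objects :: "('o \<Rightarrow> 'o) \<Rightarrow> ('n, 'o) fact \<Rightarrow> ('n, 'o) fact" where
  "map_objects h f = (fst f, map h (fst (snd f)), snd (snd f))"

lemma eval_atom_comp: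
  assumes "\<And>c. c \<in> consts_atom a \<Longrightarrow> h c = c"
  shows "eval_atom (h \<circ> \<sigma>) \<theta> a = map_objects h (eval_atom \<sigma> \<theta> a)"
proof (cases a)
  case (Atom P os t)
  have "eval_ot (h \<circ> \<sigma>) ot = h (eval_ot \<sigma> ot)" if "ot \<in> set os" for ot
  proof (cases ot)
    case (OC c)
    with that assms Atom show ?thesis by simp
  qed simp
  then show ?thesis using Atom by (simp add: map_objects_def)
qed

lemma derivable_map_objects:
  assumes "derivable \<Pi> B f" "\<forall>c\<in>consts_of \<Pi>. h c = c"
  shows "derivable \<Pi> (map_objects h ` B) (map_objects h f)"
  using assms
proof (induction rule: derivable.induct)
  case (base f)
  then show ?case by (auto intro: derivable.base)
next
  case (step r \<sigma> \<theta>)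
  have fix_consts: "h c = c" if "a \<in> set (body r) \<union> {head r}" "c \<in> consts_atom a" for a c
    using that step.hyps(1) step.prems unfolding consts_of_def by blast
  show ?case
  proof (rule derivable_stepI[OF step.hyps(1), where \<sigma> = "h \<circ> \<sigma>" and \<theta> = \<theta>])
    fix a assume "a \<in> set (body r)"
    then show "derivable \<Pi> (map_objects h ` B) (eval_atom (h \<circ> \<sigma>) \<theta> a)"
      using step.IH step.prems fix_consts eval_atom_comp by (metis UnI1)
  next
    show "map_objects h (eval_atom \<sigma> \<theta> (head r)) = eval_atom (h \<circ> \<sigma>) \<theta> (head r)"
      using eval_atom_comp fix_consts by (metis insertI1 sup_commute insert_is_Un)
  qed
qed

definition psi_fact :: "('n, 'o) fact \<Rightarrow> ('n xname, 'o) fact" where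
  "psi_fact f = (psi_pred (fst f), fst (snd f), snd (snd f))"

definition lift_fact :: "('n, 'o) fact \<Rightarrow> ('n xname, 'o) fact" where
  "lift_fact f = (lift_pred (fst f), fst (snd f), snd (snd f))"

lemma lift_facts_eq_image: "lift_facts D = lift_fact ` D"
  unfolding lift_facts_def lift_fact_def by (auto simp: case_prod_beta)

lemma psi_pred_eq:
  "psi_pred P = (if is_edb P \<and> is_temporal P
     then Pred (PsiN (pname P)) False (oarity P) True else lift_pred P)"
  by (cases P) simp

lemma oarity_lift_pred [simp]: "oarity (lift_pred P) = oarity P"
  by (cases P) simp

lemma psi_pred_inject [simp]: "psi_pred P = psi_pred P' \<longleftrightarrow> P = P'"
  by (cases P; cases P') auto

lemma psi_pred_eq_lift_pred:
  "psi_pred P = lift_pred P' \<longleftrightarrow> \<not> (is_edb P \<and> is_temporal P) \<and> P = P'"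
  by (cases P; cases P') auto

lemma lift_pred_inject [simp]: "lift_pred P = lift_pred P' \<longleftrightarrow> P = P'"
  by (cases P; cases P') auto

lemma fresh_preds_distinct [simp]:
  "psi_pred P \<noteq> predA" "psi_pred P \<noteq> predV" "lift_pred P \<noteq> predA" "lift_pred P \<noteq> predV"
  "predA \<noteq> predV" "predA \<noteq> psi_pred P" "predV \<noteq> psi_pred P" "predA \<noteq> lift_pred P"
  "predV \<noteq> lift_pred P" "predV \<noteq> predA"
  by (cases P; simp add: predA_def predV_def)+

lemma psi_fact_inject: "psi_fact f = psi_fact g \<longleftrightarrow> f = g"
  by (auto simp: psi_fact_def prod_eq_iff psi_pred_inject)

lemma psi_fact_idb: "\<not> is_edb P \<Longrightarrow> psi_fact (P, os, t) = (lift_pred P, os, t)"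
  by (simp add: psi_fact_def psi_pred_eq)

lemma eval_psi_atom: "eval_atom \<sigma> \<theta> (psi_atom a) = psi_fact (eval_atom \<sigma> \<theta> a)"
  by (cases a) (simp add: psi_fact_def)

lemma fst_eval_atom: "fst (eval_atom \<sigma> \<theta> a) = atom_pred a"
  by (cases a) simp

lemma body_psi_rule [simp]: "body (psi_rule r) = map psi_atom (body r)"
  and head_psi_rule [simp]: "head (psi_rule r) = psi_atom (head r)"
  by (cases r; simp)+

lemma eval_atom_xvars:
  "length os = k \<Longrightarrow> eval_atom (\<lambda>i. os ! i) \<theta> (Atom P (xvars k) (tvar j)) = (P, os, Some (\<theta> 0 + j))"
  by (simp add: xvars_def tvar_def comp_def) (metis map_nth)

lemma eval_atom_nullary: "eval_atom \<sigma> \<theta> (Atom P [] (tvar j)) = (P, [], Some (\<theta> 0 + j))"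
  by (simp add: tvar_def)

lemma derivable_V_of_A:
  assumes "(predA, [], Some t) \<in> B"
  shows "derivable (crit_program Q) B (predV, [], Some t)"
proof (rule derivable_stepI[where \<sigma> = undefined and \<theta> = "\<lambda>_. t"])
  show "Rule [Atom predA [] (tvar 0)] (Atom predV [] (tvar 0)) \<in> crit_program Q"
    unfolding crit_program_def by blast
qed (use assms in \<open>auto simp del: eval_atom.simps simp: eval_atom_nullary intro: derivable.base\<close>)

lemma derivable_V_Suc:
  assumes "derivable (crit_program Q) B (predV, [], Some t)"
  shows "derivable (crit_program Q) B (predV, [], Some (t + 1))"
proof (rule derivable_stepI[where \<sigma> = undefined and \<theta> = "\<lambda>_. t"])
  show "Rule [Atom predV [] (tvar 0)] (Atom predV [] (tvar 1)) \<in> crit_program Q"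
    unfolding crit_program_def by blast
qed (use assms in \<open>auto simp del: eval_atom.simps simp: eval_atom_nullary\<close>)

lemma derivable_psi_of_lift:
  assumes "P \<in> temporal_edb_preds (snd Q)" "length os = oarity P"
    and "(lift_pred P, os, Some t) \<in> B"
  shows "derivable (crit_program Q) B (psi_pred P, os, Some t)"
proof (rule derivable_stepI[where \<sigma> = "\<lambda>i. os ! i" and \<theta> = "\<lambda>_. t"])
  show "Rule [Atom (lift_pred P) (xvars (oarity P)) (tvar 0)]
          (Atom (psi_pred P) (xvars (oarity P)) (tvar 0)) \<in> crit_program Q"
    using assms(1) unfolding crit_program_def by blast
qed (use assms in \<open>auto simp del: eval_atom.simps simp: eval_atom_xvars intro: derivable.base\<close>)

lemma derivable_psi_Suc:
  assumes "P \<in> temporal_edb_preds (snd Q)" "length os = oarity P"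
    and "derivable (crit_program Q) B (predV, [], Some (t + 1))"
    and "derivable (crit_program Q) B (psi_pred P, os, Some t)"
  shows "derivable (crit_program Q) B (psi_pred P, os, Some (t + 1))"
proof (rule derivable_stepI[where \<sigma> = "\<lambda>i. os ! i" and \<theta> = "\<lambda>_. t"])
  show "Rule [Atom predV [] (tvar 1), Atom (psi_pred P) (xvars (oarity P)) (tvar 0)]
          (Atom (psi_pred P) (xvars (oarity P)) (tvar 1)) \<in> crit_program Q"
    using assms(1) unfolding crit_program_def by blast
qed (use assms in \<open>auto simp del: eval_atom.simps simp: eval_atom_xvars eval_atom_nullary\<close>)

lemma derivable_psi_after_crit_update:
  assumes "crit_update Q D oI \<tau>in \<subseteq> B"
    and "P \<in> temporal_edb_preds (snd Q)" "length os = oarity P" "set os \<subseteq> crit_domain Q D oI"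
    and "\<tau>in < t"
  shows "derivable (crit_program Q) B (psi_pred P, os, Some t)"
proof -
  have "derivable (crit_program Q) B (predV, [], Some (\<tau>in + 1 + int n)) \<and>
        derivable (crit_program Q) B (psi_pred P, os, Some (\<tau>in + 1 + int n))" for n
  proof (induction n)
    case 0
    have "(predA, [], Some (\<tau>in + 1)) \<in> B" "(lift_pred P, os, Some (\<tau>in + 1)) \<in> B"
      using assms(1-4) unfolding crit_update_def by blast+
    then show ?case using assms(2,3) by (simp add: derivable_V_of_A derivable_psi_of_lift)
  next
    case (Suc n)
    have V: "derivable (crit_program Q) B (predV, [], Some (\<tau>in + 1 + int n + 1))"
      using Suc.IH by (intro derivable_V_Suc) simp
    have "\<tau>in + 1 + int (Suc n) = \<tau>in + 1 + int n + 1" by simp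
    with V Suc.IH show ?case
      using derivable_psi_Suc[OF assms(2,3) V] by simp
  qed
  moreover have "t = \<tau>in + 1 + int (nat (t - \<tau>in - 1))" using assms(5) by simp
  ultimately show ?thesis by (metis (no_types))
qed

lemma derivable_psi_fact:
  assumes "derivable (snd Q) B g" "fst g \<in> preds_of (snd Q)"
    and "\<And>f. f \<in> B \<Longrightarrow> fst f \<in> preds_of (snd Q) \<Longrightarrow> derivable (crit_program Q) B' (psi_fact f)"
  shows "derivable (crit_program Q) B' (psi_fact g)"
  using assms(1,2)
proof (induction rule: derivable.induct)
  case (base f)
  then show ?case by (rule assms(3))
next
  case (step r \<sigma> \<theta>)
  have "psi_rule r \<in> crit_program Q" using step.hyps unfolding crit_program_def by blast
  then show ?case
  proof (rule derivable_stepI[where \<sigma> = \<sigma> and \<theta> = \<theta>])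
    fix a assume "a \<in> set (body (psi_rule r))"
    then obtain a0 where a0: "a0 \<in> set (body r)" "a = psi_atom a0" by auto
    then have "fst (eval_atom \<sigma> \<theta> a0) \<in> preds_of (snd Q)"
      using step.hyps(1) by (auto simp: fst_eval_atom preds_of_def preds_of_rule_def)
    with a0 step.IH show "derivable (crit_program Q) B' (eval_atom \<sigma> \<theta> a)"
      by (simp add: eval_psi_atom)
  qed (simp add: eval_psi_atom)
qed

lemma derivable_psi_fact_of_lift:
  assumes "wf_fact g" "is_edb (fst g)" "fst g \<in> preds_of (snd Q)" "lift_fact g \<in> B"
  shows "derivable (crit_program Q) B (psi_fact g)"
proof -
  obtain P os t where g: "g = (P, os, t)" by (cases g)
  show ?thesis
  proof (cases "is_temporal P")
    case True
    with assms g obtain s where "t = Some s" "P \<in> temporal_edb_preds (snd Q)" "length os = oarity P"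
      by (auto simp: wf_fact_def temporal_edb_preds_def)
    with assms(4) g show ?thesis
      by (simp add: derivable_psi_of_lift psi_fact_def lift_fact_def)
  next
    case False
    then have "psi_fact g = lift_fact g" using g by (simp add: psi_fact_def lift_fact_def psi_pred_eq)
    with assms(4) show ?thesis by (simp add: derivable.base)
  qed
qed

text \<open>Read back through \<open>\<psi>\<close>, this model shows that the critical program derives nothing
  the original program cannot, provided the clock facts \<open>V\<close>, \<open>A\<close> only occur at times in
  \<open>T\<close> and temporal EDB facts persist along \<open>T\<close>.\<close>
definition crit_model :: "('n, 'o) query \<Rightarrow> ('n, 'o) fact set \<Rightarrow> int set \<Rightarrow> ('n xname, 'o) fact set" where
  "crit_model Q B T =
     psi_fact ` {g. derivable (snd Q) B g \<and> fst g \<in> preds_of (snd Q)} \<union> lift_fact ` B \<union>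
     (\<lambda>t. (predV, [], Some t)) ` T \<union> (\<lambda>t. (predA, [], Some t)) ` T"

lemma crit_model_cases:
  assumes "f \<in> crit_model Q B T"
  obtains (derived) g where "f = psi_fact g" "derivable (snd Q) B g"
    | (base) g where "f = lift_fact g" "g \<in> B"
    | (clock) R t where "f = (R, [], Some t)" "R = predA \<or> R = predV" "t \<in> T"
  using assms unfolding crit_model_def by blast

lemma psi_fact_in_crit_model:
  assumes "psi_fact g \<in> crit_model Q B T"
  shows "derivable (snd Q) B g"
  using assms
proof (cases rule: crit_model_cases)
  case (base f)
  then have "g = f"
    by (cases g, cases f) (auto simp: psi_fact_def lift_fact_def psi_pred_eq_lift_pred)
  with base show ?thesis by (simp add: derivable.base)
qed (auto simp: psi_fact_inject, auto simp: psi_fact_def)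

lemma lift_fact_in_crit_model:
  assumes "(lift_pred P, os, t) \<in> crit_model Q B T"
  shows "derivable (snd Q) B (P, os, t)"
  using assms
proof (cases rule: crit_model_cases)
  case (derived g)
  then have "g = (P, os, t)"
    by (cases g) (auto simp: psi_fact_def psi_pred_eq_lift_pred eq_commute[of "lift_pred P"])
  with derived show ?thesis by simp
next
  case (base g)
  then have "g = (P, os, t)" by (cases g) (auto simp: lift_fact_def)
  with base show ?thesis by (simp add: derivable.base)
qed auto

lemma nullary_in_crit_model:
  assumes "(R, [], Some t) \<in> crit_model Q B T" "R = predA \<or> R = predV"
  shows "t \<in> T"
  using assms by (cases rule: crit_model_cases) (auto simp: psi_fact_def lift_fact_def)

lemma psi_fact_in_crit_modelI:
  "derivable (snd Q) B g \<Longrightarrow> fst g \<in> preds_of (snd Q) \<Longrightarrow> psi_fact g \<in> crit_model Q B T"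
  by (simp add: crit_model_def)

lemma crit_program_cases:
  assumes "r \<in> crit_program Q"
  obtains (psi) r0 where "r0 \<in> snd Q" "r = psi_rule r0"
    | (A_V) "r = Rule [Atom predA [] (tvar 0)] (Atom predV [] (tvar 0))"
    | (V_Suc) "r = Rule [Atom predV [] (tvar 0)] (Atom predV [] (tvar 1))"
    | (copy) P where "P \<in> temporal_edb_preds (snd Q)"
        "r = Rule [Atom (lift_pred P) (xvars (oarity P)) (tvar 0)]
          (Atom (psi_pred P) (xvars (oarity P)) (tvar 0))"
    | (propagate) P where "P \<in> temporal_edb_preds (snd Q)"
        "r = Rule [Atom predV [] (tvar 1), Atom (psi_pred P) (xvars (oarity P)) (tvar 0)]
          (Atom (psi_pred P) (xvars (oarity P)) (tvar 1))"
  using assms unfolding crit_program_def by blast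

lemma crit_model_sat:
  fixes Q :: "('n, 'o) query"
  assumes T_Suc: "\<And>t. t \<in> T \<Longrightarrow> t + 1 \<in> T"
    and persist: "\<And>P os t. t + 1 \<in> T \<Longrightarrow> P \<in> temporal_edb_preds (snd Q) \<Longrightarrow>
      derivable (snd Q) B (P, os, Some t) \<Longrightarrow> derivable (snd Q) B (P, os, Some (t + 1))"
    and "r \<in> crit_program Q"
  shows "sat_rule (crit_model Q B T) r"
  unfolding sat_rule_def
proof (intro allI impI)
  fix \<sigma> :: "nat \<Rightarrow> 'o" and \<theta> :: "nat \<Rightarrow> int"
  let ?M = "crit_model Q B T" and ?os = "\<lambda>k. map \<sigma> [0..<k]" and ?t = "\<theta> 0"
  assume body: "\<forall>a\<in>set (body r). eval_atom \<sigma> \<theta> a \<in> ?M"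
  from assms(3) show "eval_atom \<sigma> \<theta> (head r) \<in> ?M"
  proof (cases rule: crit_program_cases)
    case (psi r0)
    have "derivable (snd Q) B (eval_atom \<sigma> \<theta> (head r0))"
      using body psi by (intro derivable.step[OF psi(1)])
        (auto simp: eval_psi_atom intro: psi_fact_in_crit_model)
    moreover have "fst (eval_atom \<sigma> \<theta> (head r0)) \<in> preds_of (snd Q)"
      using psi(1) by (auto simp: fst_eval_atom preds_of_def preds_of_rule_def)
    ultimately show ?thesis using psi(2) by (simp add: eval_psi_atom psi_fact_in_crit_modelI)
  next
    case A_V
    with body have "?t \<in> T" by (auto simp: tvar_def intro: nullary_in_crit_model)
    with A_V show ?thesis by (auto simp: crit_model_def tvar_def)
  next
    case V_Suc
    with body have "?t \<in> T" by (auto simp: tvar_def intro: nullary_in_crit_model)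
    with V_Suc T_Suc show ?thesis by (auto simp: crit_model_def tvar_def)
  next
    case (copy P)
    with body have "derivable (snd Q) B (P, ?os (oarity P), Some ?t)"
      by (auto simp: xvars_def tvar_def comp_def intro: lift_fact_in_crit_model)
    with copy show ?thesis
      by (auto simp: xvars_def tvar_def comp_def temporal_edb_preds_def psi_fact_def
          dest: psi_fact_in_crit_modelI[where T = T])
  next
    case (propagate P)
    with body have "?t + 1 \<in> T"
      by (auto simp: tvar_def intro: nullary_in_crit_model)
    moreover from propagate body have "psi_fact (P, ?os (oarity P), Some ?t) \<in> ?M"
      by (simp add: xvars_def tvar_def comp_def psi_fact_def)
    then have "derivable (snd Q) B (P, ?os (oarity P), Some ?t)"
      by (rule psi_fact_in_crit_model)
    ultimately have "derivable (snd Q) B (P, ?os (oarity P), Some (?t + 1))"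
      using propagate(1) persist by blast
    with propagate show ?thesis
      by (auto simp: xvars_def tvar_def comp_def temporal_edb_preds_def psi_fact_def
          dest: psi_fact_in_crit_modelI[where T = T])
  qed
qed

lemma derivable_crit_program_decode:
  assumes "derivable (crit_program Q) B' (lift_pred P, os, t)" "B' \<subseteq> crit_model Q B T"
    and "\<And>t. t \<in> T \<Longrightarrow> t + 1 \<in> T"
    and "\<And>P os t. t + 1 \<in> T \<Longrightarrow> P \<in> temporal_edb_preds (snd Q) \<Longrightarrow>
      derivable (snd Q) B (P, os, Some t) \<Longrightarrow> derivable (snd Q) B (P, os, Some (t + 1))"
  shows "derivable (snd Q) B (P, os, t)"
proof -
  have "\<forall>r\<in>crit_program Q. sat_rule (crit_model Q B T) r"
    using assms(3,4) by (simp add: crit_model_sat)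
  then have "(lift_pred P, os, t) \<in> crit_model Q B T"
    using derivable_in_model assms(1,2) by blast
  then show ?thesis by (rule lift_fact_in_crit_model)
qed

lemma answers_iff_derivable:
  "os \<in> answers Q B \<tau> \<longleftrightarrow> length os = oarity (fst Q) \<and> derivable (snd Q) B (fst Q, os, Some \<tau>)"
  by (simp add: answers_def entails_iff_derivable)

lemma crit_answers_iff_derivable:
  "os \<in> answers (crit_query Q) B \<tau> \<longleftrightarrow>
     length os = oarity (fst Q) \<and> derivable (crit_program Q) B (lift_pred (fst Q), os, Some \<tau>)"
  by (simp add: answers_iff_derivable crit_query_def)

lemma answers_mono: "B \<subseteq> B' \<Longrightarrow> answers Q B \<tau> \<subseteq> answers Q B' \<tau>"
  by (auto simp: answers_iff_derivable intro: derivable_mono)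

lemma derivable_psi_fact_lift_facts:
  assumes "is_dataset D" "lift_facts D \<subseteq> B" "derivable (snd Q) D g" "fst g \<in> preds_of (snd Q)"
  shows "derivable (crit_program Q) B (psi_fact g)"
  using assms(3,4)
proof (rule derivable_psi_fact)
  fix f assume "f \<in> D" "fst f \<in> preds_of (snd Q)"
  with assms(1,2) show "derivable (crit_program Q) B (psi_fact f)"
    by (intro derivable_psi_fact_of_lift) (auto simp: is_dataset_def lift_facts_eq_image)
qed

lemma crit_answers_lift_facts:
  assumes "wf_query Q" "is_dataset D"
  shows "answers (crit_query Q) (lift_facts D) \<tau> = answers Q D \<tau>"
proof -
  have idb: "\<not> is_edb (fst Q)" and P: "fst Q \<in> preds_of (snd Q)"
    using assms(1) by (auto simp: wf_query_def)
  have "derivable (crit_program Q) (lift_facts D) (lift_pred (fst Q), os, Some \<tau>) \<longleftrightarrow>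
      derivable (snd Q) D (fst Q, os, Some \<tau>)" for os
  proof
    assume "derivable (crit_program Q) (lift_facts D) (lift_pred (fst Q), os, Some \<tau>)"
    moreover have "lift_facts D \<subseteq> crit_model Q D {}"
      by (auto simp: crit_model_def lift_facts_eq_image)
    ultimately show "derivable (snd Q) D (fst Q, os, Some \<tau>)"
      by (rule derivable_crit_program_decode) auto
  next
    assume "derivable (snd Q) D (fst Q, os, Some \<tau>)"
    then have "derivable (crit_program Q) (lift_facts D) (psi_fact (fst Q, os, Some \<tau>))"
      using P by (intro derivable_psi_fact_lift_facts[OF assms(2) subset_refl]) auto
    then show "derivable (crit_program Q) (lift_facts D) (lift_pred (fst Q), os, Some \<tau>)"
      by (simp add: psi_fact_idb idb)
  qed
  then show ?thesis
    unfolding set_eq_iff crit_answers_iff_derivable by (simp add: answers_iff_derivable)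
qed

text \<open>The infinite "update" that the critical update stands for.\<close>
definition crit_later_facts :: "('n, 'o) query \<Rightarrow> ('n, 'o) fact set \<Rightarrow> 'o \<Rightarrow> int \<Rightarrow> ('n, 'o) fact set"
  where "crit_later_facts Q D oI \<tau>in =
    {(P, os, Some t) | P os t. P \<in> temporal_edb_preds (snd Q) \<and> length os = oarity P \<and>
       set os \<subseteq> crit_domain Q D oI \<and> \<tau>in < t}"

lemma is_update_crit_later_facts:
  assumes "finite U" "U \<subseteq> crit_later_facts Q D oI \<tau>in"
  shows "is_update \<tau>in U"
  using assms
  by (fastforce simp: is_update_def is_dataset_def crit_later_facts_def wf_fact_def temporal_edb_preds_def)

lemma derivable_crit_update_decode:
  assumes "wf_query Q" "is_dataset D"
    and "derivable (crit_program Q) (lift_facts D \<union> crit_update Q D oI \<tau>in) (lift_pred P, os, t)"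
  shows "derivable (snd Q) (D \<union> crit_later_facts Q D oI \<tau>in) (P, os, t)"
  using assms(3)
proof (rule derivable_crit_program_decode[where T = "{t. \<tau>in < t}"])
  let ?B = "D \<union> crit_later_facts Q D oI \<tau>in"
  have "crit_update Q D oI \<tau>in \<subseteq>
      insert (predA, [], Some (\<tau>in + 1)) (lift_fact ` crit_later_facts Q D oI \<tau>in)"
    unfolding crit_update_def crit_later_facts_def by (force simp: lift_fact_def)
  then show "lift_facts D \<union> crit_update Q D oI \<tau>in \<subseteq> crit_model Q ?B {t. \<tau>in < t}"
    by (auto simp: crit_model_def lift_facts_eq_image)
  fix R os' s
  assume later: "s + 1 \<in> {t. \<tau>in < t}" and R: "R \<in> temporal_edb_preds (snd Q)"
    and d: "derivable (snd Q) ?B (R, os', Some s)"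
  have wf: "wf_program (snd Q)" using assms(1) by (simp add: wf_query_def)
  have "\<forall>g\<in>?B. wf_fact g"
    using assms(2) by (auto simp: is_dataset_def crit_later_facts_def wf_fact_def temporal_edb_preds_def)
  then have "length os' = oarity R"
    using derivable_wf_fact[OF d wf] by (simp add: wf_fact_def)
  moreover have "consts_facts (crit_later_facts Q D oI \<tau>in) \<subseteq> crit_domain Q D oI"
    unfolding consts_facts_def crit_later_facts_def by auto
  then have "consts_of (snd Q) \<union> consts_facts ?B \<subseteq> crit_domain Q D oI"
    unfolding crit_domain_def consts_facts_def by auto
  with derivable_objects[OF d wf] have "set os' \<subseteq> crit_domain Q D oI" by auto
  ultimately have "(R, os', Some (s + 1)) \<in> ?B"
    using later R by (simp add: crit_later_facts_def)
  then show "derivable (snd Q) ?B (R, os', Some (s + 1))" by (rule derivable.base)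
qed simp

lemma crit_answers_stable_if_DTP:
  assumes "wf_query Q" "is_history \<tau>in D" "DTP Q D \<tau>in \<tau>out"
    and "os \<in> answers (crit_query Q) (lift_facts D \<union> crit_update Q D oI \<tau>in) \<tau>out"
  shows "os \<in> answers (crit_query Q) (lift_facts D) \<tau>out"
proof -
  let ?L = "crit_later_facts Q D oI \<tau>in"
  have D: "is_dataset D" using assms(2) by (simp add: is_history_def)
  from assms(4) have len: "length os = oarity (fst Q)" and d:
    "derivable (crit_program Q) (lift_facts D \<union> crit_update Q D oI \<tau>in) (lift_pred (fst Q), os, Some \<tau>out)"
    by (simp_all add: crit_answers_iff_derivable)
  have "derivable (snd Q) (D \<union> ?L) (fst Q, os, Some \<tau>out)"
    by (rule derivable_crit_update_decode[OF assms(1) D d])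
  then obtain F where F: "F \<subseteq> D \<union> ?L" "finite F" "derivable (snd Q) F (fst Q, os, Some \<tau>out)"
    by (rule derivable_finite_base)
  have "is_update \<tau>in (F \<inter> ?L)" using F(2) by (intro is_update_crit_later_facts) auto
  moreover have "os \<in> answers Q (D \<union> (F \<inter> ?L)) \<tau>out"
    using F len by (auto simp: answers_iff_derivable intro: derivable_mono)
  ultimately have "os \<in> answers Q D \<tau>out" using assms(3) by (simp add: DTP_def)
  then show ?thesis using crit_answers_lift_facts[OF assms(1) D] by simp
qed

lemma derivable_crit_of_update:
  assumes "is_dataset D" "is_update \<tau>in U" "consts_facts U \<subseteq> crit_domain Q D oI"
    and "derivable (snd Q) (D \<union> U) g" "fst g \<in> preds_of (snd Q)"
  shows "derivable (crit_program Q) (lift_facts D \<union> crit_update Q D oI \<tau>in) (psi_fact g)"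
  using assms(4,5)
proof (rule derivable_psi_fact)
  fix f assume f: "f \<in> D \<union> U" "fst f \<in> preds_of (snd Q)"
  obtain P os t where f_eq: "f = (P, os, t)" by (cases f)
  show "derivable (crit_program Q) (lift_facts D \<union> crit_update Q D oI \<tau>in) (psi_fact f)"
  proof (cases "f \<in> D")
    case True
    with assms(1) f(2) show ?thesis
      by (intro derivable_psi_fact_of_lift) (auto simp: is_dataset_def lift_facts_eq_image)
  next
    case False
    with f(1) have "f \<in> U" by simp
    with assms(2) f_eq have wf: "wf_fact f" "is_edb P"
      and later: "case t of None \<Rightarrow> False | Some s \<Rightarrow> \<tau>in < s"
      by (auto simp: is_update_def is_dataset_def)
    then obtain s where s: "t = Some s" "\<tau>in < s" by (cases t) auto
    with f(2) f_eq wf have "P \<in> temporal_edb_preds (snd Q)" "length os = oarity P"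
      by (auto simp: wf_fact_def temporal_edb_preds_def)
    moreover have "set os \<subseteq> crit_domain Q D oI"
      using \<open>f \<in> U\<close> f_eq assms(3) unfolding consts_facts_def by force
    ultimately have "derivable (crit_program Q) (lift_facts D \<union> crit_update Q D oI \<tau>in)
        (psi_pred P, os, Some s)"
      by (intro derivable_psi_after_crit_update[OF _ _ _ _ s(2)]) auto
    then show ?thesis using f_eq s(1) by (simp add: psi_fact_def)
  qed
qed

definition collapse :: "'o set \<Rightarrow> 'o \<Rightarrow> 'o \<Rightarrow> 'o" where
  "collapse K o' c = (if c \<in> K then c else o')"

lemma map_objects_collapse_fixes:
  "consts_facts D \<subseteq> K \<Longrightarrow> map_objects (collapse K o') ` D = D"
proof -
  assume K: "consts_facts D \<subseteq> K"
  have "map_objects (collapse K o') f = f" if "f \<in> D" for f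
  proof -
    have "map (collapse K o') (fst (snd f)) = fst (snd f)"
      using that K by (auto simp: collapse_def consts_facts_def intro!: map_idI)
    then show ?thesis by (simp add: map_objects_def)
  qed
  then show ?thesis by force
qed

lemma consts_facts_map_objects_collapse:
  "consts_facts (map_objects (collapse K o') ` U) \<subseteq> insert o' K"
  by (auto simp: consts_facts_def map_objects_def collapse_def)

lemma map_collapse_eq:
  assumes "o' \<notin> K" "set (map (collapse K o') os) \<subseteq> K"
  shows "map (collapse K o') os = os"
proof (rule map_idI)
  fix c assume "c \<in> set os"
  with assms(2) have "collapse K o' c \<in> K" by auto
  with assms(1) show "collapse K o' c = c" by (auto simp: collapse_def split: if_splits)
qed

lemma is_update_map_objects: "is_update \<tau> U \<Longrightarrow> is_update \<tau> (map_objects h ` U)"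
  by (auto simp: is_update_def is_dataset_def wf_fact_def map_objects_def)

lemma answers_objects:
  "os \<in> answers Q B \<tau> \<Longrightarrow> wf_program (snd Q) \<Longrightarrow> set os \<subseteq> consts_of (snd Q) \<union> consts_facts B"
  using derivable_objects unfolding answers_iff_derivable by fastforce

lemma crit_answers_collapse_update:
  fixes Q :: "('n, 'o) query" and D :: "('n, 'o) fact set" and oI :: 'o
  defines "h \<equiv> collapse (consts_of (snd Q) \<union> consts_facts D) oI"
  assumes "wf_query Q" "is_dataset D" "is_update \<tau>in U" "os \<in> answers Q (D \<union> U) \<tau>"
  shows "map h os \<in> answers (crit_query Q) (lift_facts D \<union> crit_update Q D oI \<tau>in) \<tau>"
proof -
  have idb: "\<not> is_edb (fst Q)" and P: "fst Q \<in> preds_of (snd Q)"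
    using assms(2) by (auto simp: wf_query_def)
  from assms(5) have len: "length os = oarity (fst Q)"
    and d: "derivable (snd Q) (D \<union> U) (fst Q, os, Some \<tau>)"
    by (simp_all add: answers_iff_derivable)
  have "map_objects h ` D = D"
    unfolding h_def by (rule map_objects_collapse_fixes) simp
  with derivable_map_objects[OF d, of h]
  have "derivable (snd Q) (D \<union> map_objects h ` U) (fst Q, map h os, Some \<tau>)"
    by (simp add: image_Un map_objects_def h_def collapse_def)
  moreover have "consts_facts (map_objects h ` U) \<subseteq> crit_domain Q D oI"
    using consts_facts_map_objects_collapse unfolding h_def crit_domain_def by fastforce
  ultimately have "derivable (crit_program Q) (lift_facts D \<union> crit_update Q D oI \<tau>in)
      (psi_fact (fst Q, map h os, Some \<tau>))"
    using P by (intro derivable_crit_of_update[OF assms(3) is_update_map_objects[OF assms(4)]]) auto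
  with len show ?thesis by (simp add: crit_answers_iff_derivable psi_fact_idb idb)
qed

lemma DTP_if_crit_answers_stable:
  fixes Q :: "('n, 'o) query"
  assumes "wf_query Q" "is_history \<tau>in D" "oI \<notin> consts_of (snd Q) \<union> consts_facts D"
    and stable: "\<And>os. set os \<subseteq> crit_domain Q D oI \<Longrightarrow>
      os \<in> answers (crit_query Q) (lift_facts D \<union> crit_update Q D oI \<tau>in) \<tau>out \<Longrightarrow>
      os \<in> answers (crit_query Q) (lift_facts D) \<tau>out"
  shows "DTP Q D \<tau>in \<tau>out"
  unfolding DTP_def
proof (intro allI impI)
  fix U :: "('n, 'o) fact set"
  assume U: "is_update \<tau>in U"
  let ?K = "consts_of (snd Q) \<union> consts_facts D"
  let ?h = "collapse ?K oI"
  have D: "is_dataset D" using assms(2) by (simp add: is_history_def)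
  have wf: "wf_program (snd Q)" using assms(1) by (simp add: wf_query_def)
  have "os \<in> answers Q D \<tau>out" if "os \<in> answers Q (D \<union> U) \<tau>out" for os
  proof -
    have "set (map ?h os) \<subseteq> crit_domain Q D oI"
      by (auto simp: crit_domain_def collapse_def)
    with crit_answers_collapse_update[OF assms(1) D U that]
    have "map ?h os \<in> answers Q D \<tau>out"
      using stable crit_answers_lift_facts[OF assms(1) D] by simp
    moreover from this have "set (map ?h os) \<subseteq> ?K" using answers_objects wf by blast
    ultimately show ?thesis using map_collapse_eq assms(3) by metis
  qed
  then show "answers Q D \<tau>out = answers Q (D \<union> U) \<tau>out"
    using answers_mono[of D "D \<union> U"] by blast
qed

theorem lemma2:
  fixes Q :: "('n, 'o) query" and D :: "('n, 'o) fact set" and \<tau>in \<tau>out :: int and oI :: 'o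
  assumes "wf_query Q" and "temporal_query Q"
    and "is_history \<tau>in D" and "\<tau>out \<le> \<tau>in"
    and "oI \<notin> consts_of (snd Q) \<union> consts_facts D"
  shows "DTP Q D \<tau>in \<tau>out \<longleftrightarrow>
    (\<forall>os. set os \<subseteq> crit_domain Q D oI \<longrightarrow>
       os \<in> answers (crit_query Q) (lift_facts D \<union> crit_update Q D oI \<tau>in) \<tau>out \<longrightarrow>
       os \<in> answers (crit_query Q) (lift_facts D) \<tau>out)"
  using crit_answers_stable_if_DTP[OF assms(1,3)] DTP_if_crit_answers_stable[OF assms(1,3,5)]
  by blast

end
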